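(* Let $\mathcal{X}=\{A\in\mathcal{M}_d: A=A^\dagger,\ \operatorname{tr}A=0\}$ with the basis consisting of $\sigma_x^{jk}=|j\rangle\langle k|+|k\rangle\langle j|$ and $\sigma_y^{jk}=-i(|j\rangle\langle k|-|k\rangle\langle j|)$ for $1\le j<k\le d$, and $\sigma_z^j=|j\rangle\langle j|-|j+1\rangle\langle j+1|$ for $j=1,\dots,d-1$, and let $\mathcal{V}=\{A\mapsto UAU^\dagger: U\in\mathcal{M}_d\text{ unitary}\}$. Then for every pair $B_1,B_2$ of these basis vectors there is $T\in\mathcal{V}$ with $T(B_1)=B_2$.
   Context: $\{|1\rangle,\dots,|d\rangle\}$ is the standard basis of $\mathbb{C}^d$. *)

theory Defs
  imports "Jordan_Normal_Form.Matrix" Complex_Main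
begin

text \<open>Indices are 0-based: the standard basis vector |j+1> of the paper corresponds to index j < d.\<close>

definition ketbra :: "nat \<Rightarrow> nat \<Rightarrow> nat \<Rightarrow> complex mat" where
  "ketbra d j k = mat d d (\<lambda>(a, b). if a = j \<and> b = k then 1 else 0)"

definition adj :: "complex mat \<Rightarrow> complex mat" where
  "adj A = mat (dim_col A) (dim_row A) (\<lambda>(i, j). cnj (A $$ (j, i)))"

definition unitary_mat :: "nat \<Rightarrow> complex mat \<Rightarrow> bool" where
  "unitary_mat d U \<longleftrightarrow> U \<in> carrier_mat d d \<and> U * adj U = 1\<^sub>m d \<and> adj U * U = 1\<^sub>m d"

definition sigma_x :: "nat \<Rightarrow> nat \<Rightarrow> nat \<Rightarrow> complex mat" where
  "sigma_x d j k = ketbra d j k + ketbra d k j"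

definition sigma_y :: "nat \<Rightarrow> nat \<Rightarrow> nat \<Rightarrow> complex mat" where
  "sigma_y d j k = (- \<i>) \<cdot>\<^sub>m (ketbra d j k - ketbra d k j)"

definition sigma_z :: "nat \<Rightarrow> nat \<Rightarrow> complex mat" where
  "sigma_z d j = ketbra d j j - ketbra d (Suc j) (Suc j)"

definition gm_basis :: "nat \<Rightarrow> complex mat set" where
  "gm_basis d = {sigma_x d j k | j k. j < k \<and> k < d}
              \<union> {sigma_y d j k | j k. j < k \<and> k < d}
              \<union> {sigma_z d j | j. Suc j < d}"

end

theory Submission
  imports Defs "HOL-Combinatorics.Permutations" "Jordan_Normal_Form.Determinant"
begin

text \<open>
  Unitary similarity is an equivalence relation, so it suffices to show that every basis
  element is unitarily similar to one fixed matrix, namely \<open>|1\<rangle>\<langle>1| - |2\<rangle>\<langle>2|\<close>.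
  Each basis element is a 2 x 2 Pauli matrix X, Y or Z placed on the rows and columns j, k.
  Conjugating by a permutation matrix moves j, k to 1, 2; inside the upper left 2 x 2 block
  the Hadamard matrix turns X into Z and diag(1, i) turns X into Y.
\<close>

lemma dim_adj [simp]: "dim_row (adj A) = dim_col A" "dim_col (adj A) = dim_row A"
  by (simp_all add: adj_def)

lemma index_adj [simp]:
  "i < dim_col A \<Longrightarrow> j < dim_row A \<Longrightarrow> adj A $$ (i, j) = cnj (A $$ (j, i))"
  by (simp add: adj_def)

lemma adj_carrier_mat [simp]: "A \<in> carrier_mat n m \<Longrightarrow> adj A \<in> carrier_mat m n"
  by auto

lemma adj_adj [simp]: "adj (adj A) = A"
  by (rule eq_matI) auto

lemma adj_one_mat [simp]: "adj (1\<^sub>m n) = 1\<^sub>m n"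
  by (rule eq_matI) auto

lemma adj_zero_mat [simp]: "adj (0\<^sub>m n m) = 0\<^sub>m m n"
  by (rule eq_matI) auto

lemma adj_mult_mat:
  "A \<in> carrier_mat n m \<Longrightarrow> B \<in> carrier_mat m p \<Longrightarrow> adj (A * B) = adj B * adj A"
  by (rule eq_matI) (auto simp: scalar_prod_def intro: sum.cong)

lemma adj_mat_square: "adj (mat d d f) = mat d d (\<lambda>(a, b). cnj (f (b, a)))"
  by (rule eq_matI) auto

lemma adj_four_block_mat:
  assumes "A \<in> carrier_mat nr1 nc1" "B \<in> carrier_mat nr1 nc2"
    "C \<in> carrier_mat nr2 nc1" "D \<in> carrier_mat nr2 nc2"
  shows "adj (four_block_mat A B C D) = four_block_mat (adj A) (adj C) (adj B) (adj D)"
  using assms by (intro eq_matI) auto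

lemma mult_mat_mat_square:
  "mat d d f * mat d d g = mat d d (\<lambda>(a, b). \<Sum>c = 0..<d. f (a, c) * g (c, b))"
  by (rule eq_matI) (auto simp: scalar_prod_def)

lemma unitary_matI:
  assumes "U \<in> carrier_mat d d" "U * adj U = 1\<^sub>m d"
  shows "unitary_mat d U"
  using assms mat_mult_left_right_inverse[of U d "adj U"] by (simp add: unitary_mat_def)

lemma unitary_mat_carrier [simp]: "unitary_mat d U \<Longrightarrow> U \<in> carrier_mat d d"
  by (simp add: unitary_mat_def)

lemma unitary_mat_adj: "unitary_mat d U \<Longrightarrow> unitary_mat d (adj U)"
  by (simp add: unitary_mat_def)

lemma unitary_mat_mult:
  assumes U: "unitary_mat d U" and V: "unitary_mat d V"
  shows "unitary_mat d (V * U)"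
proof (rule unitary_matI)
  note [simp] = unitary_mat_carrier[OF U] unitary_mat_carrier[OF V]
  have "V * U * adj (V * U) = V * (U * adj U) * adj V"
    by (simp add: adj_mult_mat[of V d d U d] assoc_mult_mat[of _ d d _ d _ d]
        mult_carrier_mat[of _ d d _ d])
  also have "\<dots> = 1\<^sub>m d"
    using U V by (simp add: unitary_mat_def right_mult_one_mat[of V d d])
  finally show "V * U * adj (V * U) = 1\<^sub>m d" .
qed (meson U V mult_carrier_mat unitary_mat_carrier)

definition unitarily_similar :: "nat \<Rightarrow> complex mat \<Rightarrow> complex mat \<Rightarrow> bool" where
  "unitarily_similar d A B \<longleftrightarrow> (\<exists>U. unitary_mat d U \<and> U * A * adj U = B)"

lemma unitarily_similarI:
  "unitary_mat d U \<Longrightarrow> U * A * adj U = B \<Longrightarrow> unitarily_similar d A B"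
  unfolding unitarily_similar_def by blast

lemma unitarily_similar_sym:
  assumes A: "A \<in> carrier_mat d d" and "unitarily_similar d A B"
  shows "unitarily_similar d B A"
proof -
  obtain U where U: "unitary_mat d U" and B: "U * A * adj U = B"
    using assms(2) unfolding unitarily_similar_def by blast
  note [simp] = unitary_mat_carrier[OF U]
  have "adj U * B * adj (adj U) = (adj U * U) * A * (adj U * U)"
    using A
    by (simp add: B[symmetric] assoc_mult_mat[of _ d d _ d _ d] mult_carrier_mat[of _ d d _ d])
  also have "\<dots> = A"
    using U A by (simp add: unitary_mat_def)
  finally show ?thesis
    using unitary_mat_adj[OF U] by (rule unitarily_similarI[rotated])
qed

lemma unitarily_similar_trans:
  assumes A: "A \<in> carrier_mat d d"
    and "unitarily_similar d A B" and "unitarily_similar d B C"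
  shows "unitarily_similar d A C"
proof -
  obtain U where U: "unitary_mat d U" and B: "U * A * adj U = B"
    using assms(2) unfolding unitarily_similar_def by blast
  obtain V where V: "unitary_mat d V" and C: "V * B * adj V = C"
    using assms(3) unfolding unitarily_similar_def by blast
  note [simp] = unitary_mat_carrier[OF U] unitary_mat_carrier[OF V]
  have "V * U * A * adj (V * U) = V * (U * A * adj U) * adj V"
    using A by (simp add: adj_mult_mat[of V d d U d] assoc_mult_mat[of _ d d _ d _ d]
        mult_carrier_mat[of _ d d _ d])
  then show ?thesis
    using unitary_mat_mult[OF U V] by (auto simp: B C intro: unitarily_similarI)
qed

definition perm_mat :: "nat \<Rightarrow> (nat \<Rightarrow> nat) \<Rightarrow> complex mat" where
  "perm_mat d s = mat d d (\<lambda>(a, b). if s a = b then 1 else 0)"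

lemma unitary_perm_mat:
  assumes s: "s permutes {0..<d}"
  shows "unitary_mat d (perm_mat d s)"
proof (rule unitary_matI)
  have "s a < d" if "a < d" for a
    using permutes_in_image[OF s] that by simp
  then show "perm_mat d s * adj (perm_mat d s) = 1\<^sub>m d"
    unfolding perm_mat_def adj_mat_square mult_mat_mat_square
    by (intro eq_matI)
      (auto simp: if_distrib[of "\<lambda>x. x * _"] permutes_inj[OF s, THEN inj_eq] cong: if_cong)
qed (simp add: perm_mat_def)

lemma perm_mat_conj:
  assumes s: "s permutes {0..<d}"
  shows "perm_mat d s * mat d d f * adj (perm_mat d s) = mat d d (\<lambda>(a, b). f (s a, s b))"
proof -
  have "s a < d" if "a < d" for a
    using permutes_in_image[OF s] that by simp
  then show ?thesis
    unfolding perm_mat_def adj_mat_square mult_mat_mat_square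
    by (intro eq_matI)
      (auto simp: if_distrib[of cnj] if_distrib[of "\<lambda>x. x * _"] if_distrib[of "\<lambda>x. _ * x"]
        cong: if_cong)
qed

lemma unitarily_similar_four_block_mat:
  assumes w: "unitary_mat n w" and m: "m \<in> carrier_mat n n"
  shows "unitarily_similar (n + e) (four_block_mat m (0\<^sub>m n e) (0\<^sub>m e n) (0\<^sub>m e e))
           (four_block_mat (w * m * adj w) (0\<^sub>m n e) (0\<^sub>m e n) (0\<^sub>m e e))"
proof (rule unitarily_similarI)
  let ?U = "four_block_mat w (0\<^sub>m n e) (0\<^sub>m e n) (1\<^sub>m e)"
  have [simp]: "w \<in> carrier_mat n n" "adj w \<in> carrier_mat n n" "w * adj w = 1\<^sub>m n"
    "dim_row w = n" "w * m \<in> carrier_mat n n" "w * m * adj w \<in> carrier_mat n n"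
    using w m by (auto simp: unitary_mat_def)
  have adj_U: "adj ?U = four_block_mat (adj w) (0\<^sub>m n e) (0\<^sub>m e n) (1\<^sub>m e)"
    by (simp add: adj_four_block_mat[of _ n n _ e _ e])
  show "unitary_mat (n + e) ?U"
    by (rule unitary_matI) (auto simp: adj_U mult_four_block_mat[of _ n n _ e _ e _ _ n _ e]
        right_mult_zero_mat[of _ n n] left_mult_zero_mat[of _ n n])
  show "?U * four_block_mat m (0\<^sub>m n e) (0\<^sub>m e n) (0\<^sub>m e e) * adj ?U
      = four_block_mat (w * m * adj w) (0\<^sub>m n e) (0\<^sub>m e n) (0\<^sub>m e e)"
    using m by (simp add: adj_U mult_four_block_mat[of _ n n _ e _ e _ _ n _ e]
        right_mult_zero_mat[of _ n n] left_mult_zero_mat[of _ n n])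
qed

lemma less_2_iff: "(p::nat) < 2 \<longleftrightarrow> p = 0 \<or> p = 1"
  by auto

lemma sum_sum_delta:
  fixes g :: "nat \<Rightarrow> nat \<Rightarrow> 'a::comm_monoid_add"
  shows "(\<Sum>p<n. \<Sum>q<n. if a = p \<and> b = q then g p q else 0)
       = (if a < n \<and> b < n then g a b else 0)"
proof -
  have "(\<Sum>q<n. if a = p \<and> b = q then g p q else 0)
      = (if a = p \<and> b < n then g p b else 0)" for p
    by (cases "a = p") simp_all
  then show ?thesis
    by (simp add: if_if_eq_conj[symmetric] cong: if_cong)
qed

text \<open>
  \<open>lift_mat d \<iota> m\<close> places \<open>m\<close> on the rows and columns \<open>\<iota> 0, \<iota> 1, \<dots>\<close> of a
  \<open>d \<times> d\<close> zero matrix; entries whose indices collide under \<open>\<iota>\<close> are added up.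
\<close>

definition lift_mat :: "nat \<Rightarrow> (nat \<Rightarrow> nat) \<Rightarrow> complex mat \<Rightarrow> complex mat" where
  "lift_mat d \<iota> m = mat d d (\<lambda>(a, b).
     \<Sum>p<dim_row m. \<Sum>q<dim_col m. if a = \<iota> p \<and> b = \<iota> q then m $$ (p, q) else 0)"

lemma dim_lift_mat [simp]: "dim_row (lift_mat d \<iota> m) = d" "dim_col (lift_mat d \<iota> m) = d"
  by (simp_all add: lift_mat_def)

lemma lift_mat_carrier [simp]: "lift_mat d \<iota> m \<in> carrier_mat d d"
  by (simp add: carrier_matI)

lemma unitarily_similar_lift_mat_perm:
  assumes s: "s permutes {0..<d}" and "m \<in> carrier_mat n n"
    and \<iota>: "\<And>p. p < n \<Longrightarrow> s (\<iota>' p) = \<iota> p"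
  shows "unitarily_similar d (lift_mat d \<iota> m) (lift_mat d \<iota>' m)"
proof (rule unitarily_similarI[OF unitary_perm_mat[OF s]])
  have "s a = \<iota> p \<longleftrightarrow> a = \<iota>' p" if "p < n" for a p
    using \<iota>[OF that] permutes_inj[OF s, THEN inj_eq] by metis
  then show "perm_mat d s * lift_mat d \<iota> m * adj (perm_mat d s) = lift_mat d \<iota>' m"
    using assms(2) unfolding lift_mat_def perm_mat_conj[OF s]
    by (intro eq_matI) (auto intro!: sum.cong)
qed

lemma unitarily_similar_lift_mat_pair:
  assumes "j \<noteq> k" "j < d" "k < d" and m: "m \<in> carrier_mat 2 2"
  shows "unitarily_similar d (lift_mat d ((!) [j, k]) m) (lift_mat d ((!) [0, 1]) m)"
proof (rule unitarily_similar_lift_mat_perm[OF _ m])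
  define k' where "k' = transpose 0 j k"
  have "k' \<noteq> 0" "k' < d" "transpose 0 j k' = k"
    using assms(1-3) by (auto simp: k'_def transpose_def)
  moreover have "1 < d"
    using assms(1-3) by linarith
  ultimately show "transpose 0 j \<circ> transpose 1 k' permutes {0..<d}"
    using assms(2) by (auto intro!: permutes_compose permutes_swap_id)
  show "(transpose 0 j \<circ> transpose 1 k') ([0, 1] ! p) = [j, k] ! p" if "p < 2" for p
    using \<open>k' \<noteq> 0\<close> \<open>transpose 0 j k' = k\<close> that by (auto simp: less_2_iff)
qed

lemma lift_mat_eq_four_block_mat:
  assumes m: "m \<in> carrier_mat n n" and \<iota>: "\<And>p. p < n \<Longrightarrow> \<iota> p = p"
  shows "lift_mat (n + e) \<iota> m = four_block_mat m (0\<^sub>m n e) (0\<^sub>m e n) (0\<^sub>m e e)"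
proof -
  have "(\<Sum>p<n. \<Sum>q<n. if a = \<iota> p \<and> b = \<iota> q then m $$ (p, q) else 0)
      = (if a < n \<and> b < n then m $$ (a, b) else 0)" for a b
  proof -
    have "(\<Sum>p<n. \<Sum>q<n. if a = \<iota> p \<and> b = \<iota> q then m $$ (p, q) else 0)
        = (\<Sum>p<n. \<Sum>q<n. if a = p \<and> b = q then m $$ (p, q) else 0)"
      by (intro sum.cong) (simp_all add: \<iota>)
    then show ?thesis
      by (simp add: sum_sum_delta)
  qed
  then show ?thesis
    using m by (intro eq_matI) (auto simp: lift_mat_def)
qed

lemma unitarily_similar_lift_mat_conj:
  assumes w: "unitary_mat n w" and m: "m \<in> carrier_mat n n" and "n \<le> d"
    and \<iota>: "\<And>p. p < n \<Longrightarrow> \<iota> p = p"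
  shows "unitarily_similar d (lift_mat d \<iota> m) (lift_mat d \<iota> (w * m * adj w))"
proof -
  obtain e where d: "d = n + e"
    using \<open>n \<le> d\<close> le_Suc_ex by blast
  have "w * m * adj w \<in> carrier_mat n n"
    using w m by (auto simp: unitary_mat_def)
  then show ?thesis
    using unitarily_similar_four_block_mat[OF w m, of e]
    by (simp add: d lift_mat_eq_four_block_mat[OF m \<iota>]
        lift_mat_eq_four_block_mat[OF _ \<iota>])
qed

lemma sum_lessThan_2: "(\<Sum>c<2. f c) = f 0 + f (1::nat)"
  by (simp add: numeral_2_eq_2)

lemma index_lift_mat_pair:
  assumes "a < d" "b < d"
  shows "lift_mat d ((!) [j, k]) (mat 2 2 f) $$ (a, b) =
    (if a = j \<and> b = j then f (0, 0) else 0) + (if a = j \<and> b = k then f (0, 1) else 0) +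
    ((if a = k \<and> b = j then f (1, 0) else 0) + (if a = k \<and> b = k then f (1, 1) else 0))"
  using assms
  by (simp only: lift_mat_def index_mat dim_row_mat dim_col_mat sum_lessThan_2 prod.case) simp

definition pauli_x :: "complex mat" where
  "pauli_x = mat 2 2 (\<lambda>(p, q). if p = q then 0 else 1)"

definition pauli_y :: "complex mat" where
  "pauli_y = mat 2 2 (\<lambda>(p, q). if p = q then 0 else if p = 0 then - \<i> else \<i>)"

definition pauli_z :: "complex mat" where
  "pauli_z = mat 2 2 (\<lambda>(p, q). if p \<noteq> q then 0 else if p = 0 then 1 else - 1)"

lemma pauli_carrier_mat [simp]:
  "pauli_x \<in> carrier_mat 2 2" "pauli_y \<in> carrier_mat 2 2" "pauli_z \<in> carrier_mat 2 2"
  by (simp_all add: pauli_x_def pauli_y_def pauli_z_def)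

text \<open>
  Splitting the conditionals in these goals makes the simplifier diverge on the equations
  between indices, hence \<open>split del: if_split\<close> with \<open>if_cong\<close>.
\<close>

lemma sigma_x_lift_mat: "sigma_x d j k = lift_mat d ((!) [j, k]) pauli_x"
  unfolding pauli_x_def sigma_x_def ketbra_def
  by (rule eq_matI) (simp_all add: index_lift_mat_pair split del: if_split cong: if_cong)

lemma sigma_y_lift_mat: "sigma_y d j k = lift_mat d ((!) [j, k]) pauli_y"
  unfolding pauli_y_def sigma_y_def ketbra_def
  by (rule eq_matI)
    (simp_all add: index_lift_mat_pair right_diff_distrib if_distrib[of "(*) _"]
      if_distrib[of uminus] split del: if_split cong: if_cong)

lemma sigma_z_lift_mat: "sigma_z d j = lift_mat d ((!) [j, Suc j]) pauli_z"
  unfolding pauli_z_def sigma_z_def ketbra_def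
  by (rule eq_matI)
    (simp_all add: index_lift_mat_pair if_distrib[of uminus] split del: if_split cong: if_cong)

definition hadamard :: "complex mat" where
  "hadamard = mat 2 2 (\<lambda>(p, q). (if p = 1 \<and> q = 1 then - 1 else 1) / of_real (sqrt 2))"

definition phase :: "complex mat" where
  "phase = mat 2 2 (\<lambda>(p, q). if p \<noteq> q then 0 else if p = 0 then 1 else \<i>)"

lemma complex_sqrt_2_square [simp]: "complex_of_real (sqrt 2) * complex_of_real (sqrt 2) = 2"
  by (simp flip: of_real_mult)

lemma unitary_hadamard: "unitary_mat 2 hadamard"
  by (rule unitary_matI)
    (auto simp: hadamard_def scalar_prod_def atLeast0LessThan sum_lessThan_2 less_2_iff)

lemma hadamard_conj_pauli_x: "hadamard * pauli_x * adj hadamard = pauli_z"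
  by (rule eq_matI) (auto simp: hadamard_def pauli_x_def pauli_z_def scalar_prod_def
      atLeast0LessThan sum_lessThan_2 less_2_iff)

lemma unitary_phase: "unitary_mat 2 phase"
  by (rule unitary_matI)
    (auto simp: phase_def scalar_prod_def atLeast0LessThan sum_lessThan_2 less_2_iff)

lemma phase_conj_pauli_x: "phase * pauli_x * adj phase = pauli_y"
  by (rule eq_matI) (auto simp: phase_def pauli_x_def pauli_y_def scalar_prod_def
      atLeast0LessThan sum_lessThan_2 less_2_iff)

lemma gm_basis_carrier_mat: "B \<in> gm_basis d \<Longrightarrow> B \<in> carrier_mat d d"
  unfolding gm_basis_def by (auto simp: sigma_x_lift_mat sigma_y_lift_mat sigma_z_lift_mat)

lemma gm_basis_unitarily_similar_pauli_z:
  assumes "B \<in> gm_basis d"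
  shows "unitarily_similar d B (lift_mat d ((!) [0, 1]) pauli_z)"
proof -
  let ?lift = "lift_mat d ((!) [0, 1])"
  have "2 \<le> d"
    using assms by (auto simp: gm_basis_def)
  have \<iota>: "[0, 1] ! p = p" if "p < 2" for p
    using that by (auto simp: less_2_iff)
  have x_z: "unitarily_similar d (?lift pauli_x) (?lift pauli_z)"
    using unitarily_similar_lift_mat_conj[OF unitary_hadamard pauli_carrier_mat(1) \<open>2 \<le> d\<close> \<iota>]
    unfolding hadamard_conj_pauli_x .
  have y_x: "unitarily_similar d (?lift pauli_y) (?lift pauli_x)"
    using unitarily_similar_lift_mat_conj[OF unitary_phase pauli_carrier_mat(1) \<open>2 \<le> d\<close> \<iota>]
    unfolding phase_conj_pauli_x by (rule unitarily_similar_sym[OF lift_mat_carrier])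
  from assms consider
      (x) j k where "B = sigma_x d j k" "j < k" "k < d"
    | (y) j k where "B = sigma_y d j k" "j < k" "k < d"
    | (z) j where "B = sigma_z d j" "Suc j < d"
    unfolding gm_basis_def by blast
  then show ?thesis
  proof cases
    case x
    then have "unitarily_similar d B (?lift pauli_x)"
      using unitarily_similar_lift_mat_pair[of j k d pauli_x] by (simp add: sigma_x_lift_mat)
    with x_z show ?thesis
      using unitarily_similar_trans[OF gm_basis_carrier_mat[OF assms]] by blast
  next
    case y
    then have "unitarily_similar d B (?lift pauli_y)"
      using unitarily_similar_lift_mat_pair[of j k d pauli_y] by (simp add: sigma_y_lift_mat)
    with y_x x_z show ?thesis
      using unitarily_similar_trans[OF gm_basis_carrier_mat[OF assms]] by blast
  next
    case z
    then show ?thesis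
      using unitarily_similar_lift_mat_pair[of j "Suc j" d pauli_z] by (simp add: sigma_z_lift_mat)
  qed
qed

theorem lemma2:
  fixes d :: nat
  assumes "B1 \<in> gm_basis d" and "B2 \<in> gm_basis d"
  shows "\<exists>U. unitary_mat d U \<and> U * B1 * adj U = B2"
proof -
  have "unitarily_similar d (lift_mat d ((!) [0, 1]) pauli_z) B2"
    using gm_basis_carrier_mat[OF assms(2)] gm_basis_unitarily_similar_pauli_z[OF assms(2)]
    by (rule unitarily_similar_sym)
  then have "unitarily_similar d B1 B2"
    using gm_basis_carrier_mat[OF assms(1)] gm_basis_unitarily_similar_pauli_z[OF assms(1)]
    by (blast intro: unitarily_similar_trans)
  then show ?thesis
    unfolding unitarily_similar_def .
qed

end
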